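(* If $p$ is a prime number with $p\geq 7$, then \[ B^{(-p+3)}_{p-3}\equiv 0\pmod p. \]
   Context: For any integer $k$, let $\mathrm{Li}_k(t)=\sum_{n=1}^{\infty} t^n/n^k$. The poly-Bernoulli numbers $B^{(k)}_n$ ($n\ge 0$) are defined by $\frac{\mathrm{Li}_k(1-e^{-t})}{1-e^{-t}}=\sum_{n=0}^{\infty}B^{(k)}_n\frac{t^n}{n!}$. For negative upper index these are integers. *)

theory Defs
  imports "HOL-Computational_Algebra.Formal_Power_Series"
begin

text \<open>Formal power series of Li_k(x)/x = sum_{n>=0} x^n / (n+1)^k, for any integer k.\<close>
definition Li_div_fps :: "int \<Rightarrow> rat fps" where
  "Li_div_fps k = Abs_fps (\<lambda>n. (of_nat (n + 1)) powi (- k))"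

text \<open>Poly-Bernoulli numbers: Li_k(1-e^{-t})/(1-e^{-t}) = sum_n B_n^(k) t^n/n!.
  The generating function is the composition of Li_k(x)/x with x = 1 - e^{-t}.\<close>
definition poly_bernoulli :: "int \<Rightarrow> nat \<Rightarrow> rat" where
  "poly_bernoulli k n = fact n * fps_nth (Li_div_fps k oo (1 - fps_exp (-1))) n"

end

theory Submission
  imports Defs "HOL-Number_Theory.Number_Theory" "HOL-Computational_Algebra.Polynomial"
begin

(* Work modulo p, where i^(p-2) stands for 1/i, and put n = p - 3, which is even. Expanding
   Li_{-n}(1 - e^{-t})/(1 - e^{-t}) gives B_n^(-n) = sum_{r=1}^{p-1} r^n sum_j (-1)^j C(r-1,j) j^n.
   Modulo p, (-1)^j C(r-1,j) = prod_{i=1}^{j} (1 - r/i) is the value at r of a polynomial of degree j,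
   and summing r^n times such a polynomial over the nonzero residues r extracts minus its coefficient
   of x^2, because sum_r r^e is -1 or 0 according as p - 1 divides e or not. Hence B_n^(-n) is
   congruent to -sum_j e_2(1, 1/2, ..., 1/j)/j^2. Splitting off the last factor,
   e_2(1, ..., 1/j) = e_2(1, ..., 1/(j-1)) + H_{j-1}/j; the first part is evaluated by the same
   polynomial trick together with sum_k (-1)^(k-1) C(r,k)/k = H_r, and the whole sum collapses to
   sum_r (H_{r-1} - H_r)/r^3 = -sum_r 1/r^4, which vanishes since p - 1 does not divide 4. *)

lemma sum_atLeast1_lessThan_eq_sum_Suc: "(\<Sum>r=1..<n. f r) = (\<Sum>j<n - 1. f (Suc j))"
  by (cases n) (simp_all add: sum.shift_bounds_Suc_ivl[of f 0, simplified] atLeast0LessThan)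

lemma of_nat_Suc_times_choose_Suc:
  "of_nat (Suc k) * of_nat (n choose Suc k) = (of_nat n - of_nat k) * (of_nat (n choose k) :: 'a::comm_ring_1)"
proof (cases "k \<le> n")
  case True
  have "Suc k * (n choose Suc k) = (n - k) * (n choose k)"
    by (simp only: binomial_absorption binomial_absorb_comp)
  then show ?thesis
    using True by (metis of_nat_diff of_nat_mult)
qed (simp add: binomial_eq_0)

lemma alternating_sum_choose_Suc:
  assumes "0 < m" and "m \<le> N"
  shows "(\<Sum>j<N. (-1) ^ j * int (m choose Suc j)) = 1"
proof -
  have "0 = (\<Sum>k\<le>m. (-1) ^ k * int (m choose k))"
    using choose_alternating_sum[OF \<open>0 < m\<close>] by simp
  also have "\<dots> = 1 - (\<Sum>j<m. (-1) ^ j * int (m choose Suc j))"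
    by (simp add: sum.atMost_shift sum_negf)
  also have "(\<Sum>j<m. (-1) ^ j * int (m choose Suc j)) = (\<Sum>j<N. (-1) ^ j * int (m choose Suc j))"
    using \<open>m \<le> N\<close> by (intro sum.mono_neutral_left) auto
  finally show ?thesis
    by simp
qed


section \<open>Poly-Bernoulli numbers of negative upper index\<close>

unbundle fps_syntax

lemma fact_times_fps_nth_one_minus_exp_neg_power:
  "fact n * ((1 - fps_exp (-1 :: 'a :: field_char_0)) ^ i) $ n
    = (\<Sum>j\<le>i. (-1) ^ j * of_nat (i choose j) * (- of_nat j) ^ n)"
proof -
  have "(1 - fps_exp (-1 :: 'a)) ^ i = (\<Sum>j\<le>i. of_nat (i choose j) * (- fps_exp (-1)) ^ j)"
    using binomial_ring[of "- fps_exp (-1 :: 'a)" 1 i] by (simp add: mult_ac)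
  also have "\<dots> = (\<Sum>j\<le>i. fps_const ((-1) ^ j * of_nat (i choose j)) * fps_exp (- of_nat j))"
  proof (intro sum.cong refl)
    fix j
    have "(- fps_exp (-1 :: 'a)) ^ j = (-1) ^ j * fps_exp (-1) ^ j"
      by (rule power_minus)
    also have "\<dots> = fps_const ((-1) ^ j) * fps_exp (- of_nat j)"
      by (simp add: fps_exp_power_mult flip: fps_const_power fps_const_neg)
    finally show "of_nat (i choose j) * (- fps_exp (-1 :: 'a)) ^ j
        = fps_const ((-1) ^ j * of_nat (i choose j)) * fps_exp (- of_nat j)"
      by (simp add: fps_of_nat fps_const_mult[symmetric] mult_ac)
  qed
  finally show ?thesis
    by (simp add: fps_sum_nth sum_distrib_left)
qed

(* (1 - e^(-t))^i has order i, so every outer bound N > n gives the same sum. *)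

lemma poly_bernoulli_neg_index:
  assumes "n < N"
  shows "poly_bernoulli (- int k) n
    = (\<Sum>i<N. of_nat (Suc i) ^ k * (\<Sum>j\<le>i. (-1) ^ j * of_nat (i choose j) * (- of_nat j) ^ n))"
proof -
  let ?E = "1 - fps_exp (-1 :: rat)"
  have "poly_bernoulli (- int k) n = fact n * (\<Sum>i=0..n. Li_div_fps (- int k) $ i * (?E ^ i) $ n)"
    by (simp add: poly_bernoulli_def fps_compose_nth)
  also have "(\<Sum>i=0..n. Li_div_fps (- int k) $ i * (?E ^ i) $ n) = (\<Sum>i<N. Li_div_fps (- int k) $ i * (?E ^ i) $ n)"
    using startsby_zero_power_prefix[of ?E] \<open>n < N\<close> by (intro sum.mono_neutral_left) auto
  finally show ?thesis
    by (simp add: Li_div_fps_def sum_distrib_left mult.left_commute[of "fact n"]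
        fact_times_fps_nth_one_minus_exp_neg_power)
qed

lemma poly_bernoulli_neg_index_even:
  assumes "even n" and "n < N"
  shows "poly_bernoulli (- int k) n
    = of_int (\<Sum>r=1..N. int r ^ k * (\<Sum>j<r. (-1) ^ j * int (r - 1 choose j) * int j ^ n))"
proof -
  have "(\<Sum>r=1..N. int r ^ k * (\<Sum>j<r. (-1) ^ j * int (r - 1 choose j) * int j ^ n))
      = (\<Sum>i<N. int (Suc i) ^ k * (\<Sum>j\<le>i. (-1) ^ j * int (i choose j) * int j ^ n))"
    using sum_atLeast1_lessThan_eq_sum_Suc[of "\<lambda>r. int r ^ k * (\<Sum>j<r. (-1) ^ j * int (r - 1 choose j) * int j ^ n)" "Suc N"]
    by (simp add: atLeastLessThanSuc_atLeastAtMost lessThan_Suc_atMost)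
  then show ?thesis
    using poly_bernoulli_neg_index[OF \<open>n < N\<close>, of k] \<open>even n\<close> by simp
qed


section \<open>Power sums modulo a prime\<close>

lemma fermat_theorem_int:
  assumes "prime p" and "\<not> p dvd a"
  shows "[int a ^ (p - 1) = 1] (mod int p)"
  using fermat_theorem[OF assms] by (metis cong_int_iff of_nat_1 of_nat_power)

lemma fermat_theorem_int_exp_mod:
  assumes "prime p" and "\<not> p dvd a"
  shows "[int a ^ e = int a ^ (e mod (p - 1))] (mod int p)"
proof -
  have "[(int a ^ (p - 1)) ^ (e div (p - 1)) * int a ^ (e mod (p - 1))
      = 1 ^ (e div (p - 1)) * int a ^ (e mod (p - 1))] (mod int p)"
    using fermat_theorem_int[OF assms] by (intro cong_mult cong_pow cong_refl)
  then show ?thesis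
    by (simp add: power_mult[symmetric] power_add[symmetric])
qed

lemma coprime_int_less_prime:
  assumes "prime p" and "0 < a" and "a < p"
  shows "coprime (int a) (int p)"
proof -
  have "coprime p a"
    using assms by (simp add: prime_imp_coprime nat_dvd_not_less)
  then show ?thesis
    by (simp add: coprime_commute)
qed

lemma sum_powers_telescope:
  "(\<Sum>k\<le>e. of_nat (Suc e choose k) * (\<Sum>r<n. int r ^ k)) = int n ^ Suc e"
proof -
  have "(\<Sum>k\<le>e. of_nat (Suc e choose k) * int r ^ k) = (int r + 1) ^ Suc e - int r ^ Suc e" for r
    using binomial_ring[of "int r" 1 "Suc e"] by simp
  then have "(\<Sum>k\<le>e. of_nat (Suc e choose k) * (\<Sum>r<n. int r ^ k))
      = (\<Sum>r<n. int (Suc r) ^ Suc e - int r ^ Suc e)"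
    by (simp add: sum_distrib_left sum.swap[of _ "{..<n}"] add.commute)
  also have "\<dots> = int n ^ Suc e"
    using sum_lessThan_telescope[of "\<lambda>r. int r ^ Suc e" n] by simp
  finally show ?thesis .
qed

lemma prime_dvd_sum_powers:
  assumes p: "prime p" and "0 < e" and "e < p - 1"
  shows "int p dvd (\<Sum>r<p. int r ^ e)"
  using assms(2,3)
proof (induction e rule: less_induct)
  case (less e)
  let ?S = "\<lambda>k. \<Sum>r<p. int r ^ k"
  have lower: "int p dvd (\<Sum>k<e. of_nat (Suc e choose k) * ?S k)"
  proof (rule dvd_sum)
    fix k assume "k \<in> {..<e}"
    then show "int p dvd of_nat (Suc e choose k) * ?S k"
      using less.IH[of k] less.prems by (cases "k = 0") auto
  qed
  have "(\<Sum>k<e. of_nat (Suc e choose k) * ?S k) + of_nat (Suc e) * ?S e = int p ^ Suc e"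
    using sum_powers_telescope[of e p] by (simp add: lessThan_Suc_atMost[symmetric])
  then have "int p dvd (\<Sum>k<e. of_nat (Suc e choose k) * ?S k) + int (Suc e) * ?S e"
    by simp
  then have "int p dvd int (Suc e) * ?S e"
    using lower by (simp add: dvd_add_right_iff)
  moreover have "coprime (int (Suc e)) (int p)"
    using p less.prems by (intro coprime_int_less_prime) auto
  ultimately show "int p dvd ?S e"
    by (simp add: coprime_commute coprime_dvd_mult_right_iff)
qed

lemma sum_powers_cong:
  assumes p: "prime p" and "0 < e"
  shows "[(\<Sum>r=1..<p. int r ^ e) = (if (p - 1) dvd e then -1 else 0)] (mod int p)"
proof -
  have p1: "0 < p - 1"
    using prime_gt_1_nat[OF p] by simp
  have "[(\<Sum>r=1..<p. int r ^ e) = (\<Sum>r=1..<p. int r ^ (e mod (p - 1)))] (mod int p)"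
    using p by (intro cong_sum fermat_theorem_int_exp_mod) (auto simp: nat_dvd_not_less)
  moreover have "[(\<Sum>r=1..<p. int r ^ (e mod (p - 1))) = (if (p - 1) dvd e then -1 else 0)] (mod int p)"
  proof (cases "(p - 1) dvd e")
    case True
    then show ?thesis
      using p1 by (simp add: cong_iff_dvd_diff)
  next
    case False
    then have "0 < e mod (p - 1)" and "e mod (p - 1) < p - 1"
      using p1 by (auto simp: mod_eq_0_iff_dvd[symmetric] gr0_conv_Suc)
    then have "int p dvd (\<Sum>r<p. int r ^ (e mod (p - 1)))"
      using p by (intro prime_dvd_sum_powers)
    moreover have "(\<Sum>r<p. int r ^ (e mod (p - 1))) = (\<Sum>r=1..<p. int r ^ (e mod (p - 1)))"
      using \<open>0 < e mod (p - 1)\<close> p1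
      by (simp add: atLeast1_lessThan_eq_remove0 sum.remove[of "{..<p}" 0])
    ultimately show ?thesis
      using False by (simp add: cong_0_iff)
  qed
  ultimately show ?thesis
    by (rule cong_trans)
qed

lemma sum_powers_poly_cong:
  fixes q :: "int poly"
  assumes p: "prime p" and m: "0 < m" "m < p - 1" and deg: "degree q + m < 2 * (p - 1)"
  shows "[(\<Sum>r=1..<p. int r ^ m * poly q (int r)) = - coeff q (p - 1 - m)] (mod int p)"
proof -
  let ?d = "degree q"
  have exponent: "(p - 1) dvd (m + i) \<longleftrightarrow> m + i = p - 1" if "i \<le> ?d" for i
  proof
    assume "(p - 1) dvd (m + i)"
    then obtain c where c: "m + i = (p - 1) * c" ..
    with m have "c \<noteq> 0" by (metis add_is_0 mult_0_right not_gr0)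
    moreover have "c < 2"
    proof -
      have "(p - 1) * c < (p - 1) * 2"
        using c deg that by linarith
      then show ?thesis
        by simp
    qed
    ultimately show "m + i = p - 1"
      using c by (simp add: less_2_cases_iff)
  qed simp
  have "(\<Sum>r=1..<p. int r ^ m * poly q (int r))
      = (\<Sum>i\<le>?d. coeff q i * (\<Sum>r=1..<p. int r ^ (m + i)))"
  proof -
    have "(\<Sum>r=1..<p. int r ^ m * poly q (int r))
        = (\<Sum>r=1..<p. \<Sum>i\<le>?d. coeff q i * int r ^ (m + i))"
      by (simp add: poly_altdef sum_distrib_left power_add mult_ac)
    also have "\<dots> = (\<Sum>i\<le>?d. \<Sum>r=1..<p. coeff q i * int r ^ (m + i))"
      by (rule sum.swap)
    finally show ?thesis
      by (simp add: sum_distrib_left)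
  qed
  also have "[\<dots> = (\<Sum>i\<le>?d. coeff q i * (if m + i = p - 1 then -1 else 0))] (mod int p)"
  proof (intro cong_sum cong_mult cong_refl)
    fix i assume "i \<in> {..?d}"
    then show "[(\<Sum>r=1..<p. int r ^ (m + i)) = (if m + i = p - 1 then -1 else 0)] (mod int p)"
      using exponent[of i] sum_powers_cong[OF p, of "m + i"] m by simp
  qed
  also have "(\<Sum>i\<le>?d. coeff q i * (if m + i = p - 1 then -1 else 0))
      = (\<Sum>i\<le>?d. if i = p - 1 - m then - coeff q i else 0)"
    using m by (intro sum.cong) auto
  also have "\<dots> = - coeff q (p - 1 - m)"
    by (auto simp: coeff_eq_0)
  finally show ?thesis .
qed


section \<open>Binomial coefficients and harmonic numbers modulo a prime\<close>

(* Modulo a prime p, i^(p-2) is the inverse of i: harmonic_mod p j represents the harmonic number H_j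
   and recip_poly p j the polynomial prod_{i=1}^{j} (1 - x/i). *)

definition harmonic_mod :: "nat \<Rightarrow> nat \<Rightarrow> int" where
  "harmonic_mod p j = (\<Sum>i=1..j. int i ^ (p - 2))"

definition recip_poly :: "nat \<Rightarrow> nat \<Rightarrow> int poly" where
  "recip_poly p j = (\<Prod>i=1..j. [:1, - (int i ^ (p - 2)):])"

lemma harmonic_mod_0 [simp]: "harmonic_mod p 0 = 0"
  by (simp add: harmonic_mod_def)

lemma harmonic_mod_Suc: "harmonic_mod p (Suc j) = harmonic_mod p j + int (Suc j) ^ (p - 2)"
  by (simp add: harmonic_mod_def)

lemma recip_poly_0 [simp]: "recip_poly p 0 = 1"
  by (simp add: recip_poly_def)

lemma recip_poly_Suc: "recip_poly p (Suc j) = recip_poly p j * [:1, - (int (Suc j) ^ (p - 2)):]"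
  by (simp add: recip_poly_def mult.commute)

lemma degree_recip_poly: "degree (recip_poly p j) \<le> j"
proof (induction j)
  case (Suc j)
  then show ?case
    using degree_mult_le[of "recip_poly p j" "[:1, - (int (Suc j) ^ (p - 2)):]"]
    by (simp add: recip_poly_Suc)
qed simp

lemma coeff_0_recip_poly [simp]: "coeff (recip_poly p j) 0 = 1"
  by (induction j) (simp_all add: recip_poly_Suc mult_pCons_right)

lemma coeff_1_recip_poly: "coeff (recip_poly p j) 1 = - harmonic_mod p j"
  by (induction j) (simp_all add: recip_poly_Suc mult_pCons_right harmonic_mod_Suc)

lemma coeff_2_recip_poly_Suc:
  "coeff (recip_poly p (Suc j)) 2 = coeff (recip_poly p j) 2 + int (Suc j) ^ (p - 2) * harmonic_mod p j"
  using coeff_1_recip_poly[of p j]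
  by (simp add: recip_poly_Suc mult_pCons_right numeral_2_eq_2)

lemma binomial_cong_recip_poly:
  assumes p: "prime p" and "0 < r" and "j < p"
  shows "[(-1) ^ j * int (r - 1 choose j) = poly (recip_poly p j) (int r)] (mod int p)"
  using \<open>j < p\<close>
proof (induction j)
  case (Suc j)
  let ?L = "(-1) ^ j * int (r - 1 choose j)" and ?R = "poly (recip_poly p j) (int r)"
  have "int (Suc j) * int (r - 1 choose Suc j) = (int r - int (Suc j)) * int (r - 1 choose j)"
    using of_nat_Suc_times_choose_Suc[of j "r - 1", where 'a=int] \<open>0 < r\<close> by (simp add: of_nat_diff)
  then have "int (Suc j) * ((-1) ^ Suc j * int (r - 1 choose Suc j))
      = (-1) ^ Suc j * ((int r - int (Suc j)) * int (r - 1 choose j))"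
    by (simp only: mult.left_commute[of "int (Suc j)"])
  also have "\<dots> = (int (Suc j) - int r) * ?L"
    by (simp only: power_Suc) (simp add: algebra_simps)
  also have "[\<dots> = (int (Suc j) - int r * 1) * ?R] (mod int p)"
    using Suc by (simp add: cong_mult)
  also have "[(int (Suc j) - int r * 1) * ?R = (int (Suc j) - int r * int (Suc j) ^ (p - 1)) * ?R] (mod int p)"
    using fermat_theorem_int[OF p, of "Suc j"] Suc.prems
    by (intro cong_mult cong_diff cong_refl) (auto simp: cong_sym nat_dvd_not_less)
  also have "(int (Suc j) - int r * int (Suc j) ^ (p - 1)) * ?R
      = int (Suc j) * poly (recip_poly p (Suc j)) (int r)"
  proof -
    have "p - 1 = Suc (p - 2)"
      using prime_gt_1_nat[OF p] by simp
    then have "int (Suc j) ^ (p - 1) = int (Suc j) * int (Suc j) ^ (p - 2)"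
      by simp
    then show ?thesis
      by (simp add: recip_poly_Suc algebra_simps)
  qed
  finally have "[int (Suc j) * ((-1) ^ Suc j * int (r - 1 choose Suc j))
      = int (Suc j) * poly (recip_poly p (Suc j)) (int r)] (mod int p)" .
  moreover have "coprime (int (Suc j)) (int p)"
    using p Suc.prems by (intro coprime_int_less_prime) auto
  ultimately show ?case
    using cong_mult_lcancel by blast
qed simp

lemma sum_powers_binomial_cong:
  assumes p: "prime p" and "3 < p" and "j < p"
  shows "[(\<Sum>r=1..<p. int r ^ (p - 3) * ((-1) ^ j * int (r - 1 choose j)))
    = - coeff (recip_poly p j) 2] (mod int p)"
proof -
  have "[(\<Sum>r=1..<p. int r ^ (p - 3) * ((-1) ^ j * int (r - 1 choose j)))
      = (\<Sum>r=1..<p. int r ^ (p - 3) * poly (recip_poly p j) (int r))] (mod int p)"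
    using binomial_cong_recip_poly[OF p _ \<open>j < p\<close>] by (intro cong_sum cong_mult cong_refl) auto
  also have "[(\<Sum>r=1..<p. int r ^ (p - 3) * poly (recip_poly p j) (int r))
      = - coeff (recip_poly p j) (p - 1 - (p - 3))] (mod int p)"
    using degree_recip_poly[of p j] assms by (intro sum_powers_poly_cong) auto
  finally show ?thesis
    using \<open>3 < p\<close> by (simp add: numeral_eq_Suc)
qed

lemma alternating_binomial_reciprocal_cong:
  assumes p: "prime p" and "Suc r < p"
  shows "[(\<Sum>j<p - 1. (-1) ^ j * int (Suc j) ^ (p - 2) * int (r choose j))
    = int (Suc r) ^ (p - 2)] (mod int p)"
proof -
  let ?D = "\<Sum>j<p - 1. (-1) ^ j * int (Suc j) ^ (p - 2) * int (r choose j)"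
  have pred: "p - 1 = Suc (p - 2)"
    using assms by simp
  have "int (Suc r) * ?D = (\<Sum>j<p - 1. (-1) ^ j * int (Suc j) ^ (p - 1) * int (Suc r choose Suc j))"
    unfolding sum_distrib_left
  proof (intro sum.cong refl)
    fix j
    have "int (Suc r) * int (r choose j) = int (Suc j) * int (Suc r choose Suc j)"
      by (metis Suc_times_binomial_eq mult.commute of_nat_mult)
    then show "int (Suc r) * ((-1) ^ j * int (Suc j) ^ (p - 2) * int (r choose j))
        = (-1) ^ j * int (Suc j) ^ (p - 1) * int (Suc r choose Suc j)"
      unfolding pred by (simp add: mult_ac)
  qed
  also have "[\<dots> = (\<Sum>j<p - 1. (-1) ^ j * 1 * int (Suc r choose Suc j))] (mod int p)"
  proof (intro cong_sum cong_mult cong_refl)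
    fix j assume "j \<in> {..<p - 1}"
    then show "[int (Suc j) ^ (p - 1) = 1] (mod int p)"
      using fermat_theorem_int[OF p, of "Suc j"] by (simp add: nat_dvd_not_less)
  qed
  also have "(\<Sum>j<p - 1. (-1) ^ j * 1 * int (Suc r choose Suc j)) = 1"
    using alternating_sum_choose_Suc[of "Suc r" "p - 1"] assms by (simp del: binomial_Suc_Suc)
  also have "[1 = int (Suc r) * int (Suc r) ^ (p - 2)] (mod int p)"
    using fermat_theorem_int[OF p, of "Suc r"] assms pred by (simp add: nat_dvd_not_less cong_sym)
  finally show ?thesis
    using coprime_int_less_prime[OF p, of "Suc r"] assms cong_mult_lcancel by auto
qed

lemma alternating_binomial_harmonic_cong:
  assumes p: "prime p" and "r < p"
  shows "[(\<Sum>j<p - 1. (-1) ^ j * int (Suc j) ^ (p - 2) * int (r choose Suc j))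
    = harmonic_mod p r] (mod int p)"
  using \<open>r < p\<close>
proof (induction r)
  case (Suc r)
  have "(\<Sum>j<p - 1. (-1) ^ j * int (Suc j) ^ (p - 2) * int (Suc r choose Suc j))
      = (\<Sum>j<p - 1. (-1) ^ j * int (Suc j) ^ (p - 2) * int (r choose Suc j))
        + (\<Sum>j<p - 1. (-1) ^ j * int (Suc j) ^ (p - 2) * int (r choose j))"
    by (simp add: sum.distrib[symmetric] algebra_simps)
  moreover have "[(\<Sum>j<p - 1. (-1) ^ j * int (Suc j) ^ (p - 2) * int (r choose Suc j))
      = harmonic_mod p r] (mod int p)"
    using Suc by simp
  ultimately show ?case
    using alternating_binomial_reciprocal_cong[OF p Suc.prems] by (simp add: harmonic_mod_Suc cong_add)
qed simp

lemma alternating_binomial_square_harmonic_cong: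
  assumes p: "prime p" and "3 < p" and "0 < r" and "r < p"
  shows "[int r * (\<Sum>j<p - 1. int (Suc j) ^ (p - 3) * ((-1) ^ j * int (r - 1 choose j)))
    = harmonic_mod p r] (mod int p)"
proof -
  have summand: "int r * (int (Suc j) ^ (p - 3) * ((-1) ^ j * int (r - 1 choose j)))
      = (-1) ^ j * int (Suc j) ^ (p - 2) * int (r choose Suc j)" for j
  proof -
    have "int r * int (r - 1 choose j) = int (Suc j) * int (r choose Suc j)"
      using times_binomial_minus1_eq[of "Suc j" r] by (metis diff_Suc_1 of_nat_mult zero_less_Suc)
    moreover have "p - 2 = Suc (p - 3)"
      using \<open>3 < p\<close> by simp
    ultimately show ?thesis
      by (simp add: mult_ac)
  qed
  then have "int r * (\<Sum>j<p - 1. int (Suc j) ^ (p - 3) * ((-1) ^ j * int (r - 1 choose j)))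
      = (\<Sum>j<p - 1. (-1) ^ j * int (Suc j) ^ (p - 2) * int (r choose Suc j))"
    by (simp only: sum_distrib_left summand)
  with alternating_binomial_harmonic_cong[OF p \<open>r < p\<close>] show ?thesis
    by simp
qed

lemma sum_coeff_2_recip_poly_harmonic_cong:
  assumes p: "prime p" and "3 < p"
  shows "[(\<Sum>j<p - 1. int (Suc j) ^ (p - 3) * coeff (recip_poly p j) 2)
    = - (\<Sum>r=1..<p. int r ^ (p - 4) * harmonic_mod p r)] (mod int p)"
proof -
  let ?b = "\<lambda>r j. (-1) ^ j * int (r - 1 choose j)"
  have "[(\<Sum>j<p - 1. int (Suc j) ^ (p - 3) * coeff (recip_poly p j) 2)
      = (\<Sum>j<p - 1. int (Suc j) ^ (p - 3) * - (\<Sum>r=1..<p. int r ^ (p - 3) * ?b r j))] (mod int p)"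
  proof (intro cong_sum cong_mult cong_refl)
    fix j assume "j \<in> {..<p - 1}"
    then have "[- (\<Sum>r=1..<p. int r ^ (p - 3) * ?b r j) = - (- coeff (recip_poly p j) 2)] (mod int p)"
      using sum_powers_binomial_cong[OF p \<open>3 < p\<close>, of j] by (intro cong_uminus) auto
    then show "[coeff (recip_poly p j) 2 = - (\<Sum>r=1..<p. int r ^ (p - 3) * ?b r j)] (mod int p)"
      by (simp add: cong_sym_eq)
  qed
  also have "(\<Sum>j<p - 1. int (Suc j) ^ (p - 3) * - (\<Sum>r=1..<p. int r ^ (p - 3) * ?b r j))
      = - (\<Sum>r=1..<p. int r ^ (p - 4) * (int r * (\<Sum>j<p - 1. int (Suc j) ^ (p - 3) * ?b r j)))"
  proof -
    have "p - 3 = Suc (p - 4)"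
      using \<open>3 < p\<close> by simp
    then show ?thesis
      by (simp add: sum_distrib_left sum_negf mult_ac) (rule sum.swap)
  qed
  also have "[\<dots> = - (\<Sum>r=1..<p. int r ^ (p - 4) * harmonic_mod p r)] (mod int p)"
    using alternating_binomial_square_harmonic_cong[OF p \<open>3 < p\<close>]
    by (intro cong_uminus cong_sum cong_mult cong_refl) auto
  finally show ?thesis .
qed

lemma sum_power_coeff_2_recip_poly_split_cong:
  assumes p: "prime p" and "3 < p"
  shows "[(\<Sum>j<p. int j ^ (p - 3) * coeff (recip_poly p j) 2)
    = (\<Sum>j<p - 1. int (Suc j) ^ (p - 3) * coeff (recip_poly p j) 2)
      + (\<Sum>r=1..<p. int r ^ (p - 4) * harmonic_mod p (r - 1))] (mod int p)"
proof -
  let ?X = "\<Sum>j<p - 1. int (Suc j) ^ (p - 3) * coeff (recip_poly p j) 2"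
  let ?h = "harmonic_mod p"
  have "(\<Sum>j<p. int j ^ (p - 3) * coeff (recip_poly p j) 2)
      = (\<Sum>j<p - 1. int (Suc j) ^ (p - 3) * coeff (recip_poly p (Suc j)) 2)"
    using sum.lessThan_Suc_shift[of "\<lambda>j. int j ^ (p - 3) * coeff (recip_poly p j) 2" "p - 1"] \<open>3 < p\<close>
    by simp
  also have "\<dots> = ?X + (\<Sum>j<p - 1. int (Suc j) ^ (p - 3) * (int (Suc j) ^ (p - 2) * ?h j))"
    by (simp add: coeff_2_recip_poly_Suc distrib_left sum.distrib)
  also have "\<dots> = ?X + (\<Sum>r=1..<p. int r ^ (p - 3) * (int r ^ (p - 2) * ?h (r - 1)))"
    using sum_atLeast1_lessThan_eq_sum_Suc[of "\<lambda>r. int r ^ (p - 3) * (int r ^ (p - 2) * ?h (r - 1))" p]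
    by simp
  finally have split: "(\<Sum>j<p. int j ^ (p - 3) * coeff (recip_poly p j) 2)
      = ?X + (\<Sum>r=1..<p. int r ^ (p - 3) * (int r ^ (p - 2) * ?h (r - 1)))" .
  have "[int r ^ (p - 3) * (int r ^ (p - 2) * ?h (r - 1)) = int r ^ (p - 4) * ?h (r - 1)] (mod int p)"
    if "r \<in> {1..<p}" for r
  proof -
    have "(p - 3) + (p - 2) = (p - 1) + (p - 4)"
      using \<open>3 < p\<close> by simp
    then have "int r ^ (p - 3) * (int r ^ (p - 2) * ?h (r - 1)) = int r ^ (p - 1) * (int r ^ (p - 4) * ?h (r - 1))"
      by (simp only: mult.assoc[symmetric] power_add[symmetric])
    also have "[\<dots> = 1 * (int r ^ (p - 4) * ?h (r - 1))] (mod int p)"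
      using fermat_theorem_int[OF p, of r] that by (intro cong_mult cong_refl) (simp add: nat_dvd_not_less)
    finally show ?thesis
      by simp
  qed
  then show ?thesis
    unfolding split by (intro cong_add cong_refl cong_sum)
qed

lemma sum_power_coeff_2_recip_poly_cong_0:
  assumes p: "prime p" and "7 \<le> p"
  shows "[(\<Sum>j<p. int j ^ (p - 3) * coeff (recip_poly p j) 2) = 0] (mod int p)"
proof -
  let ?h = "harmonic_mod p"
  let ?A = "\<Sum>r=1..<p. int r ^ (p - 4) * ?h r"
  let ?B = "\<Sum>r=1..<p. int r ^ (p - 4) * ?h (r - 1)"
  have "3 < p"
    using \<open>7 \<le> p\<close> by simp
  have "int r ^ (p - 4) * ?h r - int r ^ (p - 4) * ?h (r - 1) = int r ^ (2 * p - 6)" if "0 < r" for r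
  proof -
    have "?h r = ?h (r - 1) + int r ^ (p - 2)"
      using that harmonic_mod_Suc[of p "r - 1"] by simp
    moreover have "2 * p - 6 = (p - 4) + (p - 2)"
      using \<open>7 \<le> p\<close> by simp
    ultimately show ?thesis
      by (simp only: power_add) (simp add: algebra_simps)
  qed
  then have "?A - ?B = (\<Sum>r=1..<p. int r ^ (2 * p - 6))"
    unfolding sum_subtractf[symmetric] by (intro sum.cong) auto
  then have diff: "- ?A + ?B = - (\<Sum>r=1..<p. int r ^ (2 * p - 6))"
    by linarith
  have "[(\<Sum>j<p - 1. int (Suc j) ^ (p - 3) * coeff (recip_poly p j) 2) + ?B = - ?A + ?B] (mod int p)"
    using sum_coeff_2_recip_poly_harmonic_cong[OF p \<open>3 < p\<close>] by (rule cong_add) (rule cong_refl)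
  with sum_power_coeff_2_recip_poly_split_cong[OF p \<open>3 < p\<close>]
  have "[(\<Sum>j<p. int j ^ (p - 3) * coeff (recip_poly p j) 2)
      = - (\<Sum>r=1..<p. int r ^ (2 * p - 6))] (mod int p)"
    unfolding diff[symmetric] by (rule cong_trans)
  moreover have "[(\<Sum>r=1..<p. int r ^ (2 * p - 6)) = 0] (mod int p)"
  proof -
    have "2 * p - 6 = (p - 5) + (p - 1)"
      using \<open>7 \<le> p\<close> by simp
    moreover have "\<not> (p - 1) dvd (p - 5)"
      using \<open>7 \<le> p\<close> by (intro nat_dvd_not_less) auto
    ultimately have "\<not> (p - 1) dvd (2 * p - 6)"
      by (simp only: dvd_add_triv_right_iff not_False_eq_True)
    then show ?thesis
      using sum_powers_cong[OF p, of "2 * p - 6"] \<open>7 \<le> p\<close> by simp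
  qed
  ultimately show ?thesis
    using cong_trans cong_uminus by fastforce
qed

lemma prime_dvd_poly_bernoulli_diagonal_sum:
  assumes p: "prime p" and "7 \<le> p"
  shows "int p dvd (\<Sum>r=1..<p. int r ^ (p - 3) * (\<Sum>j<r. (-1) ^ j * int (r - 1 choose j) * int j ^ (p - 3)))"
proof -
  let ?b = "\<lambda>r j. (-1) ^ j * int (r - 1 choose j)"
  let ?c = "\<lambda>j. coeff (recip_poly p j) 2"
  have "(\<Sum>j<r. ?b r j * int j ^ (p - 3)) = (\<Sum>j<p. ?b r j * int j ^ (p - 3))"
    if "0 < r" and "r < p" for r
    using that by (intro sum.mono_neutral_left) auto
  then have "(\<Sum>r=1..<p. int r ^ (p - 3) * (\<Sum>j<r. ?b r j * int j ^ (p - 3)))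
      = (\<Sum>r=1..<p. \<Sum>j<p. int j ^ (p - 3) * (int r ^ (p - 3) * ?b r j))"
    by (simp add: sum_distrib_left mult_ac)
  also have "\<dots> = (\<Sum>j<p. int j ^ (p - 3) * (\<Sum>r=1..<p. int r ^ (p - 3) * ?b r j))"
    by (subst sum.swap) (simp add: sum_distrib_left)
  finally have swap: "(\<Sum>r=1..<p. int r ^ (p - 3) * (\<Sum>j<r. ?b r j * int j ^ (p - 3)))
      = (\<Sum>j<p. int j ^ (p - 3) * (\<Sum>r=1..<p. int r ^ (p - 3) * ?b r j))" .
  have "[(\<Sum>j<p. int j ^ (p - 3) * (\<Sum>r=1..<p. int r ^ (p - 3) * ?b r j))
      = (\<Sum>j<p. int j ^ (p - 3) * - ?c j)] (mod int p)"
    using sum_powers_binomial_cong[OF p] \<open>7 \<le> p\<close> by (intro cong_sum cong_mult cong_refl) auto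
  then have "[(\<Sum>j<p. int j ^ (p - 3) * (\<Sum>r=1..<p. int r ^ (p - 3) * ?b r j))
      = - (\<Sum>j<p. int j ^ (p - 3) * ?c j)] (mod int p)"
    by (simp add: sum_negf)
  moreover have "[- (\<Sum>j<p. int j ^ (p - 3) * ?c j) = - 0] (mod int p)"
    using sum_power_coeff_2_recip_poly_cong_0[OF assms] by (rule cong_uminus)
  ultimately show ?thesis
    unfolding swap by (simp add: cong_0_iff[symmetric] cong_trans)
qed

theorem theorem3p5:
  fixes p :: nat
  assumes "prime p" and "p \<ge> 7"
  shows "\<exists>m::int. poly_bernoulli (3 - int p) (p - 3) = of_int (int p * m)"
proof -
  let ?S = "\<Sum>r=1..<p. int r ^ (p - 3) * (\<Sum>j<r. (-1) ^ j * int (r - 1 choose j) * int j ^ (p - 3))"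
  have "even (p - 3)"
    using assms prime_odd_nat[of p] by simp
  then have "poly_bernoulli (- int (p - 3)) (p - 3) = of_int ?S"
    using poly_bernoulli_neg_index_even[of "p - 3" "p - 1" "p - 3"] assms
    by (simp add: atLeastLessThanSuc_atLeastAtMost[symmetric])
  moreover have "- int (p - 3) = 3 - int p"
    using assms by simp
  moreover obtain m where "?S = int p * m"
    using prime_dvd_poly_bernoulli_diagonal_sum[OF assms] by (elim dvdE)
  ultimately have "poly_bernoulli (3 - int p) (p - 3) = of_int (int p * m)"
    by metis
  then show ?thesis ..
qed

end
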